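(* Consider the two-type branching process in random environment with geometric offspring laws described in the context, started from $z=(z_1,z_2)\in\mathbb N_0^2$, and let $S_i(k)=X_i(1)+\dots+X_i(k)$, $S_i(0)=0$. There is a constant $C$ such that for every $\varepsilon>0$, every $i\in\{1,2\}$, every $n\ge1$ and every realization of the environment $\mathbf\Pi$, $$\mathbf P_z\Big(\max_{k\le n}\big|\log Z_i(k)-S_i(k)\big|\ge\varepsilon\sqrt n,\ Z_i(n)>0\ \Big|\ \mathbf\Pi\Big)\le C z_i\,n\,e^{-\varepsilon\sqrt n}.$$
   Context: Environment: $(P_1,P_2)$ is a random vector in $(0,1)^2$; $\mathbf Q=(Q_1,Q_2)$ with $Q_i(\{j\})=P_i(1-P_i)^j$, $j\in\mathbb N_0$; the environment $\mathbf\Pi=(\mathbf Q(n))_{n\ge1}$ consists of i.i.d. copies of $\mathbf Q$ (parameters $(P_1(n),P_2(n))$). Given $\mathbf\Pi$ and $Z(n)=(z_1,z_2)$, $Z(n+1)$ is distributed as $\big(\sum_{j=1}^{z_1}\xi_1^{(n)}(j),\sum_{j=1}^{z_2}\xi_2^{(n)}(j)\big)$ with, conditionally on $\mathbf\Pi$, independent $\xi_i^{(n)}(j)$ of law $Q_i(n+1)$. $\mathbf P_z$ is the law with $Z(0)=z$. $X_i(n)=\log\frac{1-P_i(n)}{P_i(n)}$ is the logarithm of the mean of $Q_i(n)$. *)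

theory Defs
  imports "HOL-Probability.Probability"
begin

fun iid_sum_pmf :: "nat pmf \<Rightarrow> nat \<Rightarrow> nat pmf" where
  "iid_sum_pmf q 0 = return_pmf 0"
| "iid_sum_pmf q (Suc z) = bind_pmf q (\<lambda>a. map_pmf (\<lambda>b. a + b) (iid_sum_pmf q z))"

definition comp :: "nat \<Rightarrow> nat \<times> nat \<Rightarrow> nat" where
  "comp i s = (if i = 1 then fst s else snd s)"

text \<open>Environment realisation: env m i = P_i(m) (m \<ge> 1, i \<in> {1,2}).
  One generation step from state s using the offspring laws Q(m):
  Q_i(m) is geometric with Q_i(m){j} = P_i(m) (1 - P_i(m))^j; given the
  environment the offspring numbers are independent.\<close>
definition bp_step :: "(nat \<Rightarrow> nat \<Rightarrow> real) \<Rightarrow> nat \<Rightarrow> nat \<times> nat \<Rightarrow> (nat \<times> nat) pmf" where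
  "bp_step env m s =
     bind_pmf (iid_sum_pmf (geometric_pmf (env m 1)) (fst s))
       (\<lambda>a. map_pmf (\<lambda>b. (a, b)) (iid_sum_pmf (geometric_pmf (env m 2)) (snd s)))"

text \<open>Quenched law (given the environment) of the path [Z(0), ..., Z(n)] with Z(0) = z.
  Z(k+1) is obtained from Z(k) using Q(k+1).\<close>
fun bp_path :: "(nat \<Rightarrow> nat \<Rightarrow> real) \<Rightarrow> nat \<times> nat \<Rightarrow> nat \<Rightarrow> (nat \<times> nat) list pmf" where
  "bp_path env z 0 = return_pmf [z]"
| "bp_path env z (Suc n) =
     bind_pmf (bp_path env z n) (\<lambda>xs. map_pmf (\<lambda>y. xs @ [y]) (bp_step env (Suc n) (last xs)))"

definition Xenv :: "(nat \<Rightarrow> nat \<Rightarrow> real) \<Rightarrow> nat \<Rightarrow> nat \<Rightarrow> real" where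
  "Xenv env i m = ln ((1 - env m i) / env m i)"

definition Senv :: "(nat \<Rightarrow> nat \<Rightarrow> real) \<Rightarrow> nat \<Rightarrow> nat \<Rightarrow> real" where
  "Senv env i k = (\<Sum>m = 1..k. Xenv env i m)"

end

theory Submission
  imports Defs
begin

text \<open>Given the environment, the \<open>i\<close>-th coordinate of \<open>Z\<close> is a Galton-Watson process in
  varying environment with geometric offspring laws, and \<open>0\<close> is absorbing for it, so on the
  event in question the population is still positive at the time \<open>k\<close> of the deviation.
  Geometric generating functions are linear fractional, \<open>s \<mapsto> 1 - 1 / (u / (1 - s) + A)\<close>, and
  this class is closed under composition; hence \<open>Z\<^sub>i(k)\<close> has generating function \<open>f(s)\<^bsup>z\<^sub>i\<^esup>\<close>
  with \<open>f\<close> linear fractional and \<open>u = e\<^bsup>-S\<^sub>i(k)\<^esup>\<close>. Evaluating at \<open>s = 1 - 1/N\<close> and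
  \<open>s = N/(N+1)\<close> gives \<open>P(Z\<^sub>i(k) \<ge> a) \<le> 2 z\<^sub>i / (u a)\<close> and \<open>P(0 < Z\<^sub>i(k) \<le> b) \<le> 3 z\<^sub>i u b\<close>, so
  \<open>|log Z\<^sub>i(k) - S\<^sub>i(k)| \<ge> x\<close> has probability at most \<open>5 z\<^sub>i e\<^sup>-\<^sup>x\<close>. A union bound over
  \<open>k \<le> n\<close> gives the claim with \<open>C = 10\<close>.\<close>

lemma expectation_bind_pmf:
  fixes f :: "'b \<Rightarrow> real"
  assumes "\<And>x. \<bar>f x\<bar> \<le> B"
  shows "measure_pmf.expectation (bind_pmf M N) f =
    measure_pmf.expectation M (\<lambda>x. measure_pmf.expectation (N x) f)"
  unfolding measure_pmf_bind
  by (rule integral_bind[where K = "count_space UNIV" and B = B and B' = 1])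
    (use assms measure_pmf_in_subprob_algebra in auto)

lemma prob_times_le_expectation:
  fixes f :: "'a \<Rightarrow> real"
  assumes "\<And>x. indicator S x * c \<le> f x" and "\<And>x. \<bar>f x\<bar> \<le> B"
  shows "measure_pmf.prob p S * c \<le> measure_pmf.expectation p f"
proof -
  have "measure_pmf.prob p S * c = measure_pmf.expectation p (\<lambda>x. indicator S x * c)"
    by simp
  also have "\<dots> \<le> measure_pmf.expectation p f"
  proof (rule integral_mono)
    show "integrable p (\<lambda>x. indicator S x * c)"
      by (rule measure_pmf.integrable_const_bound[where B = "\<bar>c\<bar>"]) (auto simp: indicator_def)
    show "integrable p f"
      by (rule measure_pmf.integrable_const_bound[where B = B]) (auto simp: assms)
  qed (use assms in auto)
  finally show ?thesis .
qed

definition pgf :: "nat pmf \<Rightarrow> real \<Rightarrow> real" where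
  "pgf p s = measure_pmf.expectation p (\<lambda>n. s ^ n)"

lemma integrable_power_pmf:
  fixes s :: real
  assumes "0 \<le> s" "s \<le> 1"
  shows "integrable (measure_pmf p) (\<lambda>n. s ^ n)"
  by (rule measure_pmf.integrable_const_bound[where B = 1]) (use assms in \<open>auto intro: power_le_one\<close>)

lemma pgf_return_pmf [simp]: "pgf (return_pmf n) s = s ^ n"
  unfolding pgf_def by simp

lemma pgf_bind_pmf:
  "0 \<le> s \<Longrightarrow> s \<le> 1 \<Longrightarrow> pgf (bind_pmf p q) s = measure_pmf.expectation p (\<lambda>x. pgf (q x) s)"
  unfolding pgf_def by (rule expectation_bind_pmf[where B = 1]) (auto intro: power_le_one)

lemma pgf_iid_sum_pmf:
  assumes "0 \<le> s" "s \<le> 1"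
  shows "pgf (iid_sum_pmf q z) s = pgf q s ^ z"
proof (induction z)
  case (Suc z)
  have "pgf (iid_sum_pmf q (Suc z)) s =
      measure_pmf.expectation q (\<lambda>a. pgf (map_pmf ((+) a) (iid_sum_pmf q z)) s)"
    using assms by (simp add: pgf_bind_pmf)
  also have "\<dots> = measure_pmf.expectation q (\<lambda>a. s ^ a * pgf (iid_sum_pmf q z) s)"
    unfolding pgf_def by (simp add: power_add)
  finally show ?case
    using Suc by (simp add: pgf_def)
qed simp

lemma prob_ge_times_le_pgf:
  assumes "0 \<le> s" "s \<le> 1"
  shows "measure_pmf.prob p {n. N \<le> n} * (1 - s ^ N) \<le> 1 - pgf p s"
proof -
  have "measure_pmf.prob p {n. N \<le> n} * (1 - s ^ N) \<le> measure_pmf.expectation p (\<lambda>n. 1 - s ^ n)"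
    by (rule prob_times_le_expectation[where B = 1])
      (use assms in \<open>auto simp: indicator_def power_decreasing power_le_one\<close>)
  also have "\<dots> = 1 - pgf p s"
    unfolding pgf_def using assms by (simp add: integrable_power_pmf)
  finally show ?thesis .
qed

lemma prob_pos_le_times_le_pgf:
  assumes "0 \<le> s" "s \<le> 1"
  shows "measure_pmf.prob p {n. 0 < n \<and> n \<le> N} * s ^ N \<le> pgf p s - pgf p 0"
proof -
  have "measure_pmf.prob p {n. 0 < n \<and> n \<le> N} * s ^ N
      \<le> measure_pmf.expectation p (\<lambda>n. s ^ n - 0 ^ n)"
  proof (rule prob_times_le_expectation[where B = 1])
    fix n
    show "indicator {n. 0 < n \<and> n \<le> N} n * s ^ N \<le> s ^ n - 0 ^ n"
      using assms by (cases n) (auto simp: indicator_def power_decreasing simp del: power_Suc)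
    show "\<bar>s ^ n - 0 ^ n\<bar> \<le> 1"
      using assms by (cases n) (auto intro!: mult_le_one power_le_one)
  qed
  also have "\<dots> = pgf p s - pgf p 0"
    unfolding pgf_def using assms
    by (subst Bochner_Integration.integral_diff) (auto intro: integrable_power_pmf)
  finally show ?thesis .
qed

lemma pgf_geometric_pmf:
  assumes p: "0 < p" "p < 1" and s: "0 \<le> s" "s \<le> 1"
  shows "pgf (geometric_pmf p) s = p / (1 - (1 - p) * s)"
proof -
  have "0 \<le> (1 - p) * s" "(1 - p) * s \<le> 1 - p"
    using p s by (auto intro: mult_left_le)
  then have "\<bar>(1 - p) * s\<bar> < 1"
    using p by linarith
  then have "(\<lambda>n. p * ((1 - p) * s) ^ n) sums (p * (1 / (1 - (1 - p) * s)))"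
    by (intro sums_mult geometric_sums) simp
  then have sums: "(\<lambda>n. pmf (geometric_pmf p) n * s ^ n) sums (p / (1 - (1 - p) * s))"
    using p by (simp add: power_mult_distrib mult_ac)
  then have "integrable (count_space UNIV) (\<lambda>n. pmf (geometric_pmf p) n * s ^ n)"
    using p s unfolding integrable_count_space_nat_iff by (simp add: sums_iff abs_mult)
  then show ?thesis
    unfolding pgf_def measure_pmf_eq_density using sums
    by (subst integral_density) (auto simp: integral_count_space_nat sums_iff)
qed

text \<open>For \<open>f = linfrac u A\<close> the reciprocal \<open>1 / (1 - f s) = u / (1 - s) + A\<close> is affine in
  \<open>1 / (1 - s)\<close>, so composing such maps amounts to composing affine maps.\<close>
definition linfrac :: "real \<Rightarrow> real \<Rightarrow> real \<Rightarrow> real" where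
  "linfrac u A s = 1 - 1 / (u / (1 - s) + A)"

lemma linfrac_denominator_ge:
  fixes u A s :: real
  assumes "0 < u" "1 \<le> u + A" "0 \<le> s" "s < 1"
  shows "1 \<le> u / (1 - s) + A"
proof -
  have "u * (1 - s) \<le> u"
    using assms by (simp add: algebra_simps)
  then have "u \<le> u / (1 - s)"
    using assms by (simp add: le_divide_eq)
  then show ?thesis
    using assms by linarith
qed

lemma linfrac_nonneg: "0 < u \<Longrightarrow> 1 \<le> u + A \<Longrightarrow> 0 \<le> s \<Longrightarrow> s < 1 \<Longrightarrow> 0 \<le> linfrac u A s"
  using linfrac_denominator_ge[of u A s] by (simp add: linfrac_def)

lemma linfrac_less_one: "0 < u \<Longrightarrow> 1 \<le> u + A \<Longrightarrow> 0 \<le> s \<Longrightarrow> s < 1 \<Longrightarrow> linfrac u A s < 1"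
  using linfrac_denominator_ge[of u A s] by (simp add: linfrac_def)

lemma linfrac_mono:
  assumes "0 < u" "1 \<le> u + A" "0 \<le> s" "s \<le> t" "t < 1"
  shows "linfrac u A s \<le> linfrac u A t"
proof -
  have "u / (1 - s) \<le> u / (1 - t)"
    using assms by (intro divide_left_mono) auto
  then show ?thesis
    using linfrac_denominator_ge[of u A s] assms unfolding linfrac_def
    by (simp add: frac_le)
qed

lemma one_minus_linfrac_le:
  assumes "0 < u" "0 \<le> A" "0 \<le> s" "s < 1"
  shows "1 - linfrac u A s \<le> (1 - s) / u"
proof -
  have "0 < u / (1 - s)"
    using assms by simp
  then have "1 / (u / (1 - s) + A) \<le> 1 / (u / (1 - s))"
    using assms by (intro divide_left_mono mult_pos_pos add_pos_nonneg) auto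
  then show ?thesis
    by (simp add: linfrac_def)
qed

lemma linfrac_minus_linfrac_zero_le:
  assumes "0 < u" "1 \<le> u + A" "0 \<le> s" "s < 1"
  shows "linfrac u A s - linfrac u A 0 \<le> u / (1 - s) - u"
proof -
  define D0 D1 where "D0 = u + A" and "D1 = u / (1 - s) + A"
  have "1 \<le> D0" "1 \<le> D1" "D0 \<le> D1"
    using assms linfrac_denominator_ge[of u A s] by (auto simp: D0_def D1_def field_simps)
  have "1 * 1 \<le> D0 * D1"
    using \<open>1 \<le> D0\<close> \<open>1 \<le> D1\<close> by (intro mult_mono) auto
  have "1 / D0 - 1 / D1 = (D1 - D0) / (D0 * D1)"
    using \<open>1 \<le> D0\<close> \<open>1 \<le> D1\<close> by (simp add: field_simps)
  also have "\<dots> \<le> (D1 - D0) / 1"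
    using \<open>D0 \<le> D1\<close> \<open>1 * 1 \<le> D0 * D1\<close> by (intro divide_left_mono) auto
  finally have "1 / D0 - 1 / D1 \<le> D1 - D0"
    by simp
  then show ?thesis
    by (simp add: linfrac_def D0_def D1_def)
qed

lemma linfrac_linfrac: "linfrac u A (linfrac v B s) = linfrac (u * v) (u * B + A) s"
proof -
  have "u / (1 - linfrac v B s) = u * (v / (1 - s) + B)"
    by (simp add: linfrac_def)
  then have "u / (1 - linfrac v B s) = u * v / (1 - s) + u * B"
    by (simp add: algebra_simps)
  then show ?thesis
    by (simp add: linfrac_def add.assoc)
qed

lemma pgf_geometric_pmf_linfrac:
  assumes p: "0 < p" "p < 1" and s: "0 \<le> s" "s < 1"
  shows "pgf (geometric_pmf p) s = linfrac (p / (1 - p)) 1 s"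
proof -
  have "1 - (1 - p) * s = p + (1 - p) * (1 - s)"
    by (simp add: algebra_simps)
  moreover have "(1 - p) * (1 - s) > 0"
    using p s by simp
  ultimately show ?thesis
    using p s by (simp add: pgf_geometric_pmf linfrac_def field_simps)
qed

fun gw_pmf :: "(nat \<Rightarrow> nat pmf) \<Rightarrow> nat \<Rightarrow> nat \<Rightarrow> nat pmf" where
  "gw_pmf q z0 0 = return_pmf z0"
| "gw_pmf q z0 (Suc k) = bind_pmf (gw_pmf q z0 k) (iid_sum_pmf (q (Suc k)))"

lemma pgf_gw_pmf_Suc:
  assumes "0 \<le> s" "s \<le> 1"
  shows "pgf (gw_pmf q z0 (Suc k)) s = pgf (gw_pmf q z0 k) (pgf (q (Suc k)) s)"
proof -
  have "pgf (gw_pmf q z0 (Suc k)) s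
      = measure_pmf.expectation (gw_pmf q z0 k) (\<lambda>y. pgf (q (Suc k)) s ^ y)"
    using assms by (simp add: pgf_bind_pmf pgf_iid_sum_pmf)
  then show ?thesis
    by (simp add: pgf_def)
qed

lemma power_diff_le_mult_diff:
  fixes a b :: real
  assumes "0 \<le> b" "b \<le> a" "a \<le> 1"
  shows "a ^ n - b ^ n \<le> real n * (a - b)"
proof (induction n)
  case (Suc n)
  have "a ^ Suc n - b ^ Suc n = a * (a ^ n - b ^ n) + (a - b) * b ^ n"
    by (simp add: algebra_simps)
  also have "\<dots> \<le> 1 * (real n * (a - b)) + (a - b) * 1"
    using Suc assms by (intro add_mono mult_mono) (auto simp: power_mono power_le_one)
  finally show ?case
    by (simp add: algebra_simps)
qed simp

lemma power_one_minus_inverse_le_half: "1 \<le> N \<Longrightarrow> (1 - 1 / real N) ^ N \<le> 1 / 2"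
proof -
  assume "1 \<le> N"
  then have "(1 - 1 / real N) ^ N \<le> exp (-1)"
    using exp_ge_one_minus_x_over_n_power_n[of 1 N] by simp
  also have "exp (-1) \<le> (1 / 2 :: real)"
    using exp_ge_add_one_self[of 1] by (simp add: exp_minus field_simps)
  finally show ?thesis .
qed

lemma exp_minus_one_le_power_ratio: "1 \<le> N \<Longrightarrow> exp (-1) \<le> (real N / (real N + 1)) ^ N"
proof -
  assume "1 \<le> N"
  then have "(1 + 1 / real N) ^ N \<le> exp 1"
    using exp_ge_one_plus_x_over_n_power_n[of N 1] by simp
  moreover have "(real N / (real N + 1)) ^ N = inverse ((1 + 1 / real N) ^ N)"
    using \<open>1 \<le> N\<close> by (simp add: field_simps)
  moreover have "0 < (1 + 1 / real N) ^ N"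
    by (simp add: add_pos_nonneg)
  ultimately show ?thesis
    by (auto simp: exp_minus intro!: le_imp_inverse_le)
qed

locale linfrac_pgf =
  fixes \<nu> :: "nat pmf" and z0 :: nat and u A :: real
  assumes u_pos: "0 < u" and A_nonneg: "0 \<le> A" and one_le: "1 \<le> u + A"
    and pgf_eq: "\<And>s. 0 \<le> s \<Longrightarrow> s < 1 \<Longrightarrow> pgf \<nu> s = linfrac u A s ^ z0"
begin

lemma prob_at_least_nat_le:
  assumes N: "1 \<le> N"
  shows "measure_pmf.prob \<nu> {n. N \<le> n} \<le> 2 * real z0 / (u * real N)"
proof -
  define s where "s = 1 - 1 / real N"
  have s: "0 \<le> s" "s < 1"
    using N unfolding s_def by (auto simp: field_simps)
  have "measure_pmf.prob \<nu> {n. N \<le> n} * (1 - s ^ N) \<le> 1 - linfrac u A s ^ z0"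
    using prob_ge_times_le_pgf[of s \<nu> N] s by (simp add: pgf_eq)
  also have "\<dots> \<le> real z0 * (1 - linfrac u A s)"
    using power_diff_le_mult_diff[of "linfrac u A s" 1 z0] s u_pos one_le
    by (simp add: linfrac_nonneg linfrac_less_one less_imp_le)
  also have "\<dots> \<le> real z0 * ((1 - s) / u)"
    using one_minus_linfrac_le[OF u_pos A_nonneg s] by (intro mult_left_mono) auto
  also have "\<dots> = real z0 / (u * real N)"
    using N unfolding s_def by simp
  finally have bound: "measure_pmf.prob \<nu> {n. N \<le> n} * (1 - s ^ N) \<le> real z0 / (u * real N)" .
  have "1 / 2 \<le> 1 - s ^ N"
    using power_one_minus_inverse_le_half[OF N] unfolding s_def by simp
  then show ?thesis
    using bound mult_left_mono[of "1 / 2" "1 - s ^ N" "measure_pmf.prob \<nu> {n. N \<le> n}"] by simp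
qed

lemma prob_at_least_le:
  assumes "0 < a"
  shows "measure_pmf.prob \<nu> {n. a \<le> real n} \<le> 2 * real z0 / (u * a)"
proof -
  define N where "N = nat \<lceil>a\<rceil>"
  have N: "1 \<le> N" "a \<le> real N"
    using assms unfolding N_def by linarith+
  have "{n. a \<le> real n} = {n. N \<le> n}"
    unfolding N_def by (auto simp: le_nat_iff)
  then have "measure_pmf.prob \<nu> {n. a \<le> real n} \<le> 2 * real z0 / (u * real N)"
    using prob_at_least_nat_le[OF N(1)] by simp
  also have "\<dots> \<le> 2 * real z0 / (u * a)"
    using N u_pos assms by (intro divide_left_mono mult_left_mono mult_pos_pos) auto
  finally show ?thesis .
qed

lemma prob_pos_at_most_nat_le:
  assumes N: "1 \<le> N"
  shows "measure_pmf.prob \<nu> {n. 0 < n \<and> n \<le> N} \<le> exp 1 * real z0 * u * real N"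
proof -
  define s where "s = real N / (real N + 1)"
  have s: "0 \<le> s" "s < 1"
    using N unfolding s_def by (auto simp: field_simps)
  have "measure_pmf.prob \<nu> {n. 0 < n \<and> n \<le> N} * s ^ N
      \<le> linfrac u A s ^ z0 - linfrac u A 0 ^ z0"
    using prob_pos_le_times_le_pgf[of s \<nu> N] s by (simp add: pgf_eq)
  also have "\<dots> \<le> real z0 * (linfrac u A s - linfrac u A 0)"
    using s u_pos one_le
    by (intro power_diff_le_mult_diff linfrac_nonneg linfrac_mono less_imp_le[OF linfrac_less_one])
      auto
  also have "\<dots> \<le> real z0 * (u / (1 - s) - u)"
    using linfrac_minus_linfrac_zero_le[OF u_pos one_le s] by (simp add: mult_left_mono)
  also have "\<dots> = real z0 * u * real N"
    unfolding s_def by (simp add: field_simps)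
  finally have bound: "measure_pmf.prob \<nu> {n. 0 < n \<and> n \<le> N} * s ^ N \<le> real z0 * u * real N" .
  have "measure_pmf.prob \<nu> {n. 0 < n \<and> n \<le> N} * exp (-1)
      \<le> measure_pmf.prob \<nu> {n. 0 < n \<and> n \<le> N} * s ^ N"
    unfolding s_def by (intro mult_left_mono exp_minus_one_le_power_ratio N) simp
  then have "measure_pmf.prob \<nu> {n. 0 < n \<and> n \<le> N} * exp (-1) \<le> real z0 * u * real N"
    using bound by linarith
  then show ?thesis
    by (simp add: exp_minus field_simps)
qed

lemma prob_pos_at_most_le:
  assumes "0 \<le> b"
  shows "measure_pmf.prob \<nu> {n. 0 < n \<and> real n \<le> b} \<le> 3 * real z0 * u * b"
proof (cases "1 \<le> b")
  case False
  then have "{n. 0 < n \<and> real n \<le> b} = {}"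
    by auto
  then have "measure_pmf.prob \<nu> {n. 0 < n \<and> real n \<le> b} = 0"
    by (simp only: measure_empty)
  then show ?thesis
    using assms u_pos by simp
next
  case True
  define N where "N = nat \<lfloor>b\<rfloor>"
  have N: "1 \<le> N" "real N \<le> b"
    using True unfolding N_def by linarith+
  have "{n. 0 < n \<and> real n \<le> b} = {n. 0 < n \<and> n \<le> N}"
    using N unfolding N_def by (auto intro: le_nat_floor)
  then have "measure_pmf.prob \<nu> {n. 0 < n \<and> real n \<le> b} \<le> exp 1 * real z0 * u * real N"
    using prob_pos_at_most_nat_le[OF N(1)] by simp
  also have "\<dots> \<le> 3 * real z0 * u * b"
    using exp_le N u_pos by (intro mult_mono mult_right_mono) auto
  finally show ?thesis .
qed

lemma prob_ln_deviation_le: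
  assumes "0 \<le> x"
  shows "measure_pmf.prob \<nu> {n. 0 < n \<and> x \<le> \<bar>ln (real n) + ln u\<bar>} \<le> 5 * real z0 * exp (- x)"
proof -
  have "n \<in> {n. exp x / u \<le> real n} \<union> {n. 0 < n \<and> real n \<le> exp (- x) / u}"
    if n: "0 < n" and dev: "x \<le> \<bar>ln (real n) + ln u\<bar>" for n :: nat
  proof -
    have nu: "0 < real n * u"
      using n u_pos by simp
    have "x \<le> ln (real n * u) \<or> ln (real n * u) \<le> - x"
      using dev n u_pos by (auto simp: ln_mult)
    then have "exp x \<le> real n * u \<or> real n * u \<le> exp (- x)"
      using nu by (metis exp_le_cancel_iff exp_ln ln_ge_iff)
    then show ?thesis
      using n u_pos by (auto simp: divide_le_eq le_divide_eq mult.commute)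
  qed
  then have "measure_pmf.prob \<nu> {n. 0 < n \<and> x \<le> \<bar>ln (real n) + ln u\<bar>}
      \<le> measure_pmf.prob \<nu> ({n. exp x / u \<le> real n} \<union> {n. 0 < n \<and> real n \<le> exp (- x) / u})"
    by (intro measure_pmf.finite_measure_mono) auto
  also have "\<dots> \<le> measure_pmf.prob \<nu> {n. exp x / u \<le> real n}
      + measure_pmf.prob \<nu> {n. 0 < n \<and> real n \<le> exp (- x) / u}"
    by (rule measure_subadditive) (auto simp: measure_pmf.emeasure_eq_measure)
  also have "\<dots> \<le> 2 * real z0 / (u * (exp x / u)) + 3 * real z0 * u * (exp (- x) / u)"
    using u_pos by (intro add_mono prob_at_least_le prob_pos_at_most_le) auto
  also have "\<dots> = 5 * real z0 * exp (- x)"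
    using u_pos by (simp add: exp_minus field_simps)
  finally show ?thesis .
qed

end

lemma linfrac_pgf_gw_pmf_geometric:
  assumes p: "\<And>m. 1 \<le> m \<Longrightarrow> 0 < p m \<and> p m < 1"
  shows "\<exists>A. linfrac_pgf (gw_pmf (\<lambda>m. geometric_pmf (p m)) z0 k) z0 (\<Prod>m = 1..k. p m / (1 - p m)) A"
proof (induction k)
  case 0
  have "linfrac_pgf (return_pmf z0) z0 1 0"
    by unfold_locales (auto simp: linfrac_def)
  then show ?case
    by auto
next
  case (Suc k)
  define u v where "u = (\<Prod>m = 1..k. p m / (1 - p m))" and "v = p (Suc k) / (1 - p (Suc k))"
  obtain A where "linfrac_pgf (gw_pmf (\<lambda>m. geometric_pmf (p m)) z0 k) z0 u A"
    using Suc.IH unfolding u_def by blast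
  then interpret k: linfrac_pgf "gw_pmf (\<lambda>m. geometric_pmf (p m)) z0 k" z0 u A .
  have v: "0 < v" "1 \<le> v + 1"
    using p[of "Suc k"] unfolding v_def by auto
  have "(\<Prod>m = 1..Suc k. p m / (1 - p m)) = u * v"
    unfolding u_def v_def by (simp add: prod.nat_ivl_Suc')
  moreover have "linfrac_pgf (gw_pmf (\<lambda>m. geometric_pmf (p m)) z0 (Suc k)) z0 (u * v) (u + A)"
  proof
    show "0 < u * v" "0 \<le> u + A" "1 \<le> u * v + (u + A)"
      using k.u_pos k.A_nonneg k.one_le v by (auto simp: add_increasing)
    fix s :: real
    assume s: "0 \<le> s" "s < 1"
    have "pgf (gw_pmf (\<lambda>m. geometric_pmf (p m)) z0 (Suc k)) s
        = pgf (gw_pmf (\<lambda>m. geometric_pmf (p m)) z0 k) (linfrac v 1 s)"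
      using s p[of "Suc k"] pgf_gw_pmf_Suc[of s "\<lambda>m. geometric_pmf (p m)" z0 k]
      by (simp add: pgf_geometric_pmf_linfrac v_def del: gw_pmf.simps)
    also have "\<dots> = linfrac u A (linfrac v 1 s) ^ z0"
      using linfrac_nonneg[OF v s] linfrac_less_one[OF v s] by (simp add: k.pgf_eq)
    finally show "pgf (gw_pmf (\<lambda>m. geometric_pmf (p m)) z0 (Suc k)) s = linfrac (u * v) (u + A) s ^ z0"
      by (simp add: linfrac_linfrac)
  qed
  ultimately show ?case
    by auto
qed

lemma map_fst_bp_step: "map_pmf fst (bp_step env m s) = iid_sum_pmf (geometric_pmf (env m 1)) (fst s)"
  unfolding bp_step_def by (simp add: map_bind_pmf map_pmf_comp map_pmf_def[symmetric])

lemma map_snd_bp_step: "map_pmf snd (bp_step env m s) = iid_sum_pmf (geometric_pmf (env m 2)) (snd s)"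
  unfolding bp_step_def by (simp add: map_bind_pmf map_pmf_comp)

lemma map_comp_bp_step:
  "i \<in> {1, 2} \<Longrightarrow> map_pmf (comp i) (bp_step env m s) = iid_sum_pmf (geometric_pmf (env m i)) (comp i s)"
  by (cases "i = 1") (auto simp: comp_def[abs_def] map_fst_bp_step map_snd_bp_step)

lemma length_bp_path: "xs \<in> set_pmf (bp_path env z n) \<Longrightarrow> length xs = Suc n"
  by (induction n arbitrary: xs) auto

lemma last_bp_path: "xs \<in> set_pmf (bp_path env z n) \<Longrightarrow> last xs = xs ! n"
  using length_bp_path by (metis diff_Suc_1 last_conv_nth list.size(3) nat.distinct(1))

lemma map_nth_bp_path:
  "k \<le> n \<Longrightarrow> map_pmf (\<lambda>xs. xs ! k) (bp_path env z n) = map_pmf last (bp_path env z k)"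
proof (induction n)
  case (Suc n)
  show ?case
  proof (cases "k = Suc n")
    case True
    then show ?thesis
      by (auto intro!: map_pmf_cong simp: last_bp_path simp del: bp_path.simps)
  next
    case False
    then have k: "k \<le> n"
      using Suc by auto
    have "map_pmf (\<lambda>xs. xs ! k) (bp_path env z (Suc n)) =
        bind_pmf (bp_path env z n) (\<lambda>xs. map_pmf (\<lambda>y. (xs @ [y]) ! k) (bp_step env (Suc n) (last xs)))"
      by (simp add: map_bind_pmf map_pmf_comp o_def)
    also have "\<dots> = bind_pmf (bp_path env z n) (\<lambda>xs. return_pmf (xs ! k))"
      using k length_bp_path by (intro bind_pmf_cong refl) (simp add: nth_append)
    also have "\<dots> = map_pmf (\<lambda>xs. xs ! k) (bp_path env z n)"
      by (simp add: map_pmf_def)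
    finally show ?thesis
      using Suc.IH k by simp
  qed
qed simp

lemma map_comp_last_bp_path:
  assumes "i \<in> {1, 2}"
  shows "map_pmf (\<lambda>xs. comp i (last xs)) (bp_path env z k)
    = gw_pmf (\<lambda>m. geometric_pmf (env m i)) (comp i z) k"
proof (induction k)
  case (Suc k)
  have "map_pmf (\<lambda>xs. comp i (last xs)) (bp_path env z (Suc k)) =
      bind_pmf (bp_path env z k) (\<lambda>xs. map_pmf (comp i) (bp_step env (Suc k) (last xs)))"
    by (simp add: map_bind_pmf map_pmf_comp o_def)
  also have "\<dots> = bind_pmf (map_pmf (\<lambda>xs. comp i (last xs)) (bp_path env z k))
      (iid_sum_pmf (geometric_pmf (env (Suc k) i)))"
    using assms by (simp add: map_comp_bp_step bind_map_pmf)
  finally show ?case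
    using Suc by simp
qed simp

lemma map_comp_nth_bp_path:
  assumes "i \<in> {1, 2}" "k \<le> n"
  shows "map_pmf (\<lambda>xs. comp i (xs ! k)) (bp_path env z n)
    = gw_pmf (\<lambda>m. geometric_pmf (env m i)) (comp i z) k"
proof -
  have "map_pmf (\<lambda>xs. comp i (xs ! k)) (bp_path env z n)
      = map_pmf (comp i) (map_pmf (\<lambda>xs. xs ! k) (bp_path env z n))"
    by (simp add: map_pmf_comp)
  also have "\<dots> = map_pmf (\<lambda>xs. comp i (last xs)) (bp_path env z k)"
    using assms(2) by (simp add: map_nth_bp_path map_pmf_comp del: bp_path.simps)
  finally show ?thesis
    using map_comp_last_bp_path[OF assms(1)] by simp
qed

lemma comp_nth_bp_path_eq_0:
  assumes "i \<in> {1, 2}"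
  shows "xs \<in> set_pmf (bp_path env z n) \<Longrightarrow> k \<le> l \<Longrightarrow> l \<le> n \<Longrightarrow> comp i (xs ! k) = 0
    \<Longrightarrow> comp i (xs ! l) = 0"
proof (induction n arbitrary: xs l)
  case (Suc n)
  obtain ys y where xs: "xs = ys @ [y]" and ys: "ys \<in> set_pmf (bp_path env z n)"
    and y: "y \<in> set_pmf (bp_step env (Suc n) (last ys))"
    using Suc.prems(1) by auto
  have len: "length ys = Suc n"
    using ys by (rule length_bp_path)
  have ys_prefix: "comp i (ys ! j) = 0" if "k \<le> j" "j \<le> n" for j
  proof -
    have "comp i (ys ! k) = 0"
      using Suc.prems(4) that len xs by (simp add: nth_append)
    then show ?thesis
      using Suc.IH[OF ys] that by blast
  qed
  show ?case
  proof (cases "l \<le> n")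
    case True
    then show ?thesis
      using ys_prefix Suc.prems(2) len xs by (simp add: nth_append)
  next
    case False
    then have l: "l = Suc n"
      using Suc.prems(3) by simp
    show ?thesis
    proof (cases "k = l")
      case False
      then have "comp i (last ys) = 0"
        using ys_prefix[of n] Suc.prems(2) False l by (simp add: last_bp_path[OF ys])
      then have "comp i y \<in> set_pmf (iid_sum_pmf (geometric_pmf (env (Suc n) i)) 0)"
        using y map_comp_bp_step[OF assms, of env "Suc n" "last ys"] by (metis pmf.set_map imageI)
      then show ?thesis
        using l len xs by (simp add: nth_append)
    qed (use Suc.prems(4) in simp)
  qed
qed simp

lemma exp_uminus_Senv:
  assumes "\<And>m. 1 \<le> m \<Longrightarrow> 0 < env m i \<and> env m i < 1"
  shows "exp (- Senv env i k) = (\<Prod>m = 1..k. env m i / (1 - env m i))"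
  unfolding Senv_def Xenv_def sum_negf[symmetric] exp_sum[OF finite_atLeastAtMost]
  using assms by (intro prod.cong refl) (simp add: exp_minus)

lemma prob_comp_nth_ln_deviation_le:
  assumes env: "\<And>m. 1 \<le> m \<Longrightarrow> 0 < env m i \<and> env m i < 1"
    and i: "i \<in> {1, 2}" and k: "k \<le> n" and x: "0 \<le> x"
  shows "measure_pmf.prob (bp_path env z n)
      {xs. 0 < comp i (xs ! k) \<and> x \<le> \<bar>ln (real (comp i (xs ! k))) - Senv env i k\<bar>}
    \<le> 5 * real (comp i z) * exp (- x)"
proof -
  define u where "u = exp (- Senv env i k)"
  have "u = (\<Prod>m = 1..k. env m i / (1 - env m i))"
    unfolding u_def using env by (rule exp_uminus_Senv)
  moreover have "\<exists>A. linfrac_pgf (gw_pmf (\<lambda>m. geometric_pmf (env m i)) (comp i z) k) (comp i z)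
      (\<Prod>m = 1..k. env m i / (1 - env m i)) A"
    using env by (rule linfrac_pgf_gw_pmf_geometric)
  ultimately obtain A where "linfrac_pgf (gw_pmf (\<lambda>m. geometric_pmf (env m i)) (comp i z) k) (comp i z) u A"
    by blast
  then interpret linfrac_pgf "gw_pmf (\<lambda>m. geometric_pmf (env m i)) (comp i z) k" "comp i z" u A .
  have "measure_pmf.prob (bp_path env z n)
      {xs. 0 < comp i (xs ! k) \<and> x \<le> \<bar>ln (real (comp i (xs ! k))) - Senv env i k\<bar>}
    = measure_pmf.prob (map_pmf (\<lambda>xs. comp i (xs ! k)) (bp_path env z n))
      {m. 0 < m \<and> x \<le> \<bar>ln (real m) + ln u\<bar>}"
    by (simp add: u_def)
  also have "\<dots> \<le> 5 * real (comp i z) * exp (- x)"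
    unfolding map_comp_nth_bp_path[OF i k] using x by (rule prob_ln_deviation_le)
  finally show ?thesis .
qed

lemma prob_ex_comp_nth_ln_deviation_le:
  assumes env: "\<And>m. 1 \<le> m \<Longrightarrow> 0 < env m i \<and> env m i < 1"
    and i: "i \<in> {1, 2}" and x: "0 \<le> x"
  shows "measure_pmf.prob (bp_path env z n)
      {xs. \<exists>k\<le>n. 0 < comp i (xs ! k) \<and> x \<le> \<bar>ln (real (comp i (xs ! k))) - Senv env i k\<bar>}
    \<le> 5 * real (Suc n) * real (comp i z) * exp (- x)"
proof -
  define D where "D k = {xs. 0 < comp i (xs ! k) \<and> x \<le> \<bar>ln (real (comp i (xs ! k))) - Senv env i k\<bar>}"
    for k
  have "{xs. \<exists>k\<le>n. 0 < comp i (xs ! k) \<and> x \<le> \<bar>ln (real (comp i (xs ! k))) - Senv env i k\<bar>}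
      = (\<Union>k\<le>n. D k)"
    unfolding D_def by blast
  then have "measure_pmf.prob (bp_path env z n)
      {xs. \<exists>k\<le>n. 0 < comp i (xs ! k) \<and> x \<le> \<bar>ln (real (comp i (xs ! k))) - Senv env i k\<bar>}
    \<le> (\<Sum>k\<le>n. measure_pmf.prob (bp_path env z n) (D k))"
    by (simp only:) (intro measure_pmf.finite_measure_subadditive_finite, auto)
  also have "\<dots> \<le> (\<Sum>k\<le>n. 5 * real (comp i z) * exp (- x))"
    using env i x unfolding D_def by (intro sum_mono prob_comp_nth_ln_deviation_le) auto
  finally show ?thesis
    by (simp add: algebra_simps)
qed

theorem lemma9:
  "\<exists>C::real. \<forall>(env :: nat \<Rightarrow> nat \<Rightarrow> real) (z :: nat \<times> nat) (\<epsilon>::real) (i::nat) (n::nat).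
     (\<forall>m\<ge>1. \<forall>j\<in>{1,2}. 0 < env m j \<and> env m j < 1) \<longrightarrow> \<epsilon> > 0 \<longrightarrow> i \<in> {1,2} \<longrightarrow> n \<ge> 1 \<longrightarrow>
     measure_pmf.prob (bp_path env z n)
       {xs. (\<exists>k\<le>n. \<bar>ln (real (comp i (xs ! k))) - Senv env i k\<bar> \<ge> \<epsilon> * sqrt (real n))
            \<and> comp i (xs ! n) > 0}
     \<le> C * real (comp i z) * real n * exp (- \<epsilon> * sqrt (real n))"
proof (intro exI[of _ 10] allI impI)
  fix env :: "nat \<Rightarrow> nat \<Rightarrow> real" and z :: "nat \<times> nat" and \<epsilon> :: real and i n :: nat
  assume env: "\<forall>m\<ge>1. \<forall>j\<in>{1,2}. 0 < env m j \<and> env m j < 1" and "\<epsilon> > 0"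
    and i: "i \<in> {1,2}" and n: "n \<ge> 1"
  define x where "x = \<epsilon> * sqrt (real n)"
  let ?E = "{xs. (\<exists>k\<le>n. \<bar>ln (real (comp i (xs ! k))) - Senv env i k\<bar> \<ge> \<epsilon> * sqrt (real n))
            \<and> comp i (xs ! n) > 0}"
  let ?D = "{xs. \<exists>k\<le>n. 0 < comp i (xs ! k) \<and> x \<le> \<bar>ln (real (comp i (xs ! k))) - Senv env i k\<bar>}"
  have "?E \<inter> set_pmf (bp_path env z n) \<subseteq> ?D"
    using comp_nth_bp_path_eq_0[OF i] unfolding x_def by (fastforce intro: order.refl)
  then have "measure_pmf.prob (bp_path env z n) ?E \<le> measure_pmf.prob (bp_path env z n) ?D"
    by (subst measure_Int_set_pmf[symmetric]) (intro measure_pmf.finite_measure_mono, auto)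
  also have "\<dots> \<le> 5 * real (Suc n) * real (comp i z) * exp (- x)"
    using env i \<open>\<epsilon> > 0\<close> unfolding x_def by (intro prob_ex_comp_nth_ln_deviation_le) auto
  also have "\<dots> \<le> 5 * (2 * real n) * real (comp i z) * exp (- x)"
    using n by (intro mult_right_mono) auto
  finally show "measure_pmf.prob (bp_path env z n) ?E
      \<le> 10 * real (comp i z) * real n * exp (- \<epsilon> * sqrt (real n))"
    by (simp add: x_def mult_ac)
qed

end
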